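(* Let $X,Y$ be finite sets. If $A\in\mathbb{Z}^{X\times Y}$ has only nonnegative entries, then $$\operatorname{block}(A)\le\max_{x\in X}\sum_{y\in Y}|A(x,y)| .$$ More generally, every $A\in\mathbb{Z}^{X\times Y}$ satisfies $$\operatorname{block}(A)\le 2\max_{x\in X}\sum_{y\in Y}|A(x,y)| .$$
   Context: A boolean matrix $B\in\{0,1\}^{X\times Y}$ is blocky if there exist families $\{S_i\}$ of pairwise disjoint subsets of $X$ and $\{T_i\}$ of pairwise disjoint subsets of $Y$ such that the support of $B$ equals $\bigcup_i S_i\times T_i$. The block complexity $\operatorname{block}(A)$ of an integer matrix $A$ is the smallest $L\ge0$ such that $A=\sum_{i=1}^L\sigma_iB_i$ with blocky $B_i$ and signs $\sigma_i\in\{-1,1\}$. *)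

theory Defs
  imports "HOL-Library.Disjoint_Sets"
begin

text \<open>Matrices in Z^{X x Y} are functions A :: 'x => 'y => int, considered only on the
finite carrier sets X and Y.\<close>

definition blocky :: "'x set \<Rightarrow> 'y set \<Rightarrow> ('x \<Rightarrow> 'y \<Rightarrow> int) \<Rightarrow> bool" where
  "blocky X Y B \<longleftrightarrow>
     (\<forall>x\<in>X. \<forall>y\<in>Y. B x y \<in> {0, 1}) \<and>
     (\<exists>(I :: nat set) S T.
        (\<forall>i\<in>I. S i \<subseteq> X \<and> T i \<subseteq> Y) \<and>
        disjoint_family_on S I \<and> disjoint_family_on T I \<and>
        {(x, y). x \<in> X \<and> y \<in> Y \<and> B x y \<noteq> 0} = (\<Union>i\<in>I. S i \<times> T i))"

definition block :: "'x set \<Rightarrow> 'y set \<Rightarrow> ('x \<Rightarrow> 'y \<Rightarrow> int) \<Rightarrow> nat" where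
  "block X Y A = (LEAST L. \<exists>(\<sigma> :: nat \<Rightarrow> int) (Bs :: nat \<Rightarrow> 'x \<Rightarrow> 'y \<Rightarrow> int).
       (\<forall>i<L. \<sigma> i \<in> {-1, 1} \<and> blocky X Y (Bs i)) \<and>
       (\<forall>x\<in>X. \<forall>y\<in>Y. A x y = (\<Sum>i<L. \<sigma> i * Bs i x y)))"

text \<open>max over rows of the row l1-norm; the 0 is inserted only so that the
maximum is defined for X empty (all values are >= 0 anyway).\<close>
definition max_row_l1 :: "'x set \<Rightarrow> 'y set \<Rightarrow> ('x \<Rightarrow> 'y \<Rightarrow> int) \<Rightarrow> int" where
  "max_row_l1 X Y A = Max (insert 0 ((\<lambda>x. \<Sum>y\<in>Y. \<bar>A x y\<bar>) ` X))"

end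

theory Submission
  imports Defs
begin

text \<open>A nonnegative integer matrix whose row sums are at most \<open>m\<close> is a sum of \<open>m\<close> blocky
  matrices: choose one positive entry in every nonzero row; the resulting 0/1 matrix has at
  most one nonzero entry per row, hence is blocky with the columns as blocks, and subtracting
  it lowers every nonzero row sum by one. A general matrix is the difference of its positive
  and negative parts, each of which has row sums bounded by the row \<open>l\<^sub>1\<close>-norms.\<close>

lemma blocky_if_one_nonzero_per_row:
  fixes B :: "'x \<Rightarrow> 'y \<Rightarrow> int"
  assumes "finite Y"
    and zero_one: "\<forall>x\<in>X. \<forall>y\<in>Y. B x y \<in> {0, 1}"
    and one_per_row: "\<forall>x\<in>X. \<forall>y\<in>Y. \<forall>y'\<in>Y. B x y \<noteq> 0 \<longrightarrow> B x y' \<noteq> 0 \<longrightarrow> y = y'"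
  shows "blocky X Y B"
proof -
  obtain g where g: "bij_betw g {..<card Y} Y"
    using ex_bij_betw_nat_finite[OF \<open>finite Y\<close>] by (auto simp: lessThan_atLeast0)
  define S where "S i = {x\<in>X. B x (g i) \<noteq> 0}" for i
  define T where "T i = {g i}" for i
  have inj: "inj_on g {..<card Y}" and onto: "g ` {..<card Y} = Y"
    using g by (auto simp: bij_betw_def)
  have "\<forall>i\<in>{..<card Y}. S i \<subseteq> X \<and> T i \<subseteq> Y"
    using onto unfolding S_def T_def by auto
  moreover have "disjoint_family_on S {..<card Y}"
    unfolding disjoint_family_on_def
  proof (intro ballI impI)
    fix i j assume "i \<in> {..<card Y}" "j \<in> {..<card Y}" "i \<noteq> j"
    then have "g i \<noteq> g j" "g i \<in> Y" "g j \<in> Y"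
      using inj onto by (auto simp: inj_on_def)
    then show "S i \<inter> S j = {}"
      using one_per_row unfolding S_def by blast
  qed
  moreover have "disjoint_family_on T {..<card Y}"
    using inj unfolding disjoint_family_on_def T_def inj_on_def by auto
  moreover have "{(x, y). x \<in> X \<and> y \<in> Y \<and> B x y \<noteq> 0} = (\<Union>i<card Y. S i \<times> T i)"
  proof (intro equalityI subsetI)
    fix p assume "p \<in> {(x, y). x \<in> X \<and> y \<in> Y \<and> B x y \<noteq> 0}"
    then obtain x y where "p = (x, y)" "x \<in> X" "y \<in> Y" "B x y \<noteq> 0"
      by blast
    moreover obtain i where "i < card Y" "y = g i"
      using onto \<open>y \<in> Y\<close> by blast
    ultimately show "p \<in> (\<Union>i<card Y. S i \<times> T i)"
      unfolding S_def T_def by blast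
  qed (use onto in \<open>auto simp: S_def T_def\<close>)
  ultimately show ?thesis
    unfolding blocky_def using zero_one by blast
qed

lemma exists_blocky_unit_row_sums_below:
  fixes A :: "'x \<Rightarrow> 'y \<Rightarrow> int"
  assumes "finite Y" and nonneg: "\<forall>x\<in>X. \<forall>y\<in>Y. 0 \<le> A x y"
  shows "\<exists>B. blocky X Y B \<and> (\<forall>x\<in>X. \<forall>y\<in>Y. 0 \<le> B x y \<and> B x y \<le> A x y) \<and>
    (\<forall>x\<in>X. (\<exists>y\<in>Y. A x y \<noteq> 0) \<longrightarrow> (\<Sum>y\<in>Y. B x y) = 1)"
proof -
  define pick where "pick x = (SOME y. y \<in> Y \<and> A x y \<noteq> 0)" for x
  define B where "B x y = (if (\<exists>y\<in>Y. A x y \<noteq> 0) \<and> y = pick x then 1 else 0 :: int)" for x y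
  have pick: "pick x \<in> Y \<and> A x (pick x) \<noteq> 0" if "\<exists>y\<in>Y. A x y \<noteq> 0" for x
    unfolding pick_def using that by (rule someI_ex[OF bexE]) blast
  have "blocky X Y B"
    by (rule blocky_if_one_nonzero_per_row[OF \<open>finite Y\<close>]) (auto simp: B_def)
  moreover have "0 \<le> B x y \<and> B x y \<le> A x y" if "x \<in> X" "y \<in> Y" for x y
  proof (cases "(\<exists>y\<in>Y. A x y \<noteq> 0) \<and> y = pick x")
    case True
    then have "0 < A x y" using pick nonneg that by (simp add: order_less_le)
    then show ?thesis using True by (simp add: B_def)
  qed (use nonneg that in \<open>auto simp: B_def\<close>)
  moreover have "\<forall>x\<in>X. (\<exists>y\<in>Y. A x y \<noteq> 0) \<longrightarrow> (\<Sum>y\<in>Y. B x y) = 1"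
    using pick \<open>finite Y\<close> unfolding B_def by simp
  ultimately show ?thesis by blast
qed

lemma nonneg_eq_sum_blocky:
  fixes A :: "'x \<Rightarrow> 'y \<Rightarrow> int"
  assumes "finite Y" and "\<forall>x\<in>X. \<forall>y\<in>Y. 0 \<le> A x y" and "\<forall>x\<in>X. (\<Sum>y\<in>Y. A x y) \<le> int m"
  shows "\<exists>Bs. (\<forall>i<m. blocky X Y (Bs i)) \<and> (\<forall>x\<in>X. \<forall>y\<in>Y. A x y = (\<Sum>i<m. Bs i x y))"
  using assms(2,3)
proof (induction m arbitrary: A)
  case 0
  then have "\<forall>x\<in>X. \<forall>y\<in>Y. A x y = 0"
    using sum_nonneg_eq_0_iff[OF \<open>finite Y\<close>] by (metis antisym of_nat_0 sum_nonneg)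
  then show ?case by simp
next
  case (Suc m)
  obtain B where B: "blocky X Y B" "\<forall>x\<in>X. \<forall>y\<in>Y. 0 \<le> B x y \<and> B x y \<le> A x y"
      "\<forall>x\<in>X. (\<exists>y\<in>Y. A x y \<noteq> 0) \<longrightarrow> (\<Sum>y\<in>Y. B x y) = 1"
    using exists_blocky_unit_row_sums_below[OF \<open>finite Y\<close> Suc.prems(1)] by blast
  have "\<forall>x\<in>X. (\<Sum>y\<in>Y. A x y - B x y) \<le> int m"
  proof
    fix x assume "x \<in> X"
    show "(\<Sum>y\<in>Y. A x y - B x y) \<le> int m"
    proof (cases "\<exists>y\<in>Y. A x y \<noteq> 0")
      case True
      then have "(\<Sum>y\<in>Y. B x y) = 1" using B(3) \<open>x \<in> X\<close> by blast
      then show ?thesis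
        using Suc.prems(2)[rule_format, OF \<open>x \<in> X\<close>] by (simp add: sum_subtractf)
    next
      case False
      then have "\<forall>y\<in>Y. A x y - B x y = 0"
        using B(2) \<open>x \<in> X\<close> by (fastforce intro: order_antisym)
      then show ?thesis by simp
    qed
  qed
  moreover have "\<forall>x\<in>X. \<forall>y\<in>Y. 0 \<le> A x y - B x y"
    using B(2) by simp
  ultimately obtain Bs where Bs: "\<forall>i<m. blocky X Y (Bs i)"
      "\<forall>x\<in>X. \<forall>y\<in>Y. A x y - B x y = (\<Sum>i<m. Bs i x y)"
    using Suc.IH[of "\<lambda>x y. A x y - B x y"] by auto
  have "\<forall>i<Suc m. blocky X Y ((Bs(m := B)) i)"
    using Bs(1) B(1) by (simp add: less_Suc_eq)
  moreover have "\<forall>x\<in>X. \<forall>y\<in>Y. A x y = (\<Sum>i<Suc m. (Bs(m := B)) i x y)"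
    using Bs(2) by (simp add: algebra_simps)
  ultimately show ?case by blast
qed

definition signed_blocky_sum :: "'x set \<Rightarrow> 'y set \<Rightarrow> ('x \<Rightarrow> 'y \<Rightarrow> int) \<Rightarrow> nat \<Rightarrow> bool" where
  "signed_blocky_sum X Y A L \<longleftrightarrow> (\<exists>(\<sigma> :: nat \<Rightarrow> int) Bs.
     (\<forall>i<L. \<sigma> i \<in> {-1, 1} \<and> blocky X Y (Bs i)) \<and>
     (\<forall>x\<in>X. \<forall>y\<in>Y. A x y = (\<Sum>i<L. \<sigma> i * Bs i x y)))"

lemma block_le:
  assumes "signed_blocky_sum X Y A L"
  shows "block X Y A \<le> L"
  using assms unfolding block_def signed_blocky_sum_def by (rule Least_le)

lemma signed_blocky_sum_diff:
  assumes P: "signed_blocky_sum X Y P m" and N: "signed_blocky_sum X Y N n"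
    and A: "\<forall>x\<in>X. \<forall>y\<in>Y. A x y = P x y - N x y"
  shows "signed_blocky_sum X Y A (m + n)"
proof -
  obtain \<sigma>P BP where BP: "\<forall>i<m. \<sigma>P i \<in> {-1, 1} \<and> blocky X Y (BP i)"
      "\<forall>x\<in>X. \<forall>y\<in>Y. P x y = (\<Sum>i<m. \<sigma>P i * BP i x y)"
    using P unfolding signed_blocky_sum_def by blast
  obtain \<sigma>N BN where BN: "\<forall>i<n. \<sigma>N i \<in> {-1, 1} \<and> blocky X Y (BN i)"
      "\<forall>x\<in>X. \<forall>y\<in>Y. N x y = (\<Sum>i<n. \<sigma>N i * BN i x y)"
    using N unfolding signed_blocky_sum_def by blast
  define \<sigma> where "\<sigma> i = (if i < m then \<sigma>P i else - \<sigma>N (i - m))" for i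
  define Bs where "Bs i = (if i < m then BP i else BN (i - m))" for i
  have "\<forall>i<m + n. \<sigma> i \<in> {-1, 1} \<and> blocky X Y (Bs i)"
  proof (intro allI impI)
    fix i assume "i < m + n"
    then show "\<sigma> i \<in> {-1, 1} \<and> blocky X Y (Bs i)"
      using BP(1) BN(1)[rule_format, of "i - m"] unfolding \<sigma>_def Bs_def by auto
  qed
  moreover have "A x y = (\<Sum>i<m + n. \<sigma> i * Bs i x y)" if "x \<in> X" "y \<in> Y" for x y
  proof -
    have "(\<Sum>i<m + n. \<sigma> i * Bs i x y) = (\<Sum>i<m. \<sigma> i * Bs i x y) + (\<Sum>i=m..<m + n. \<sigma> i * Bs i x y)"
      by (simp add: lessThan_atLeast0 sum.atLeastLessThan_concat)
    also have "(\<Sum>i<m. \<sigma> i * Bs i x y) = P x y"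
      using BP(2) that unfolding \<sigma>_def Bs_def by simp
    also have "(\<Sum>i=m..<m + n. \<sigma> i * Bs i x y) = (\<Sum>i<n. \<sigma> (i + m) * Bs (i + m) x y)"
      using sum.shift_bounds_nat_ivl[of "\<lambda>i. \<sigma> i * Bs i x y" 0 m n]
      by (simp add: add.commute lessThan_atLeast0)
    also have "\<dots> = - N x y"
      using BN(2) that by (simp add: \<sigma>_def Bs_def sum_negf)
    finally show ?thesis using A that by simp
  qed
  ultimately show ?thesis unfolding signed_blocky_sum_def by blast
qed

lemma signed_blocky_sum_nonneg:
  assumes "finite Y" and "\<forall>x\<in>X. \<forall>y\<in>Y. 0 \<le> A x y" and "\<forall>x\<in>X. (\<Sum>y\<in>Y. A x y) \<le> int m"
  shows "signed_blocky_sum X Y A m"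
  using nonneg_eq_sum_blocky[OF assms] unfolding signed_blocky_sum_def
  by (intro exI[of _ "\<lambda>_. 1"]) auto

lemma max_row_l1_nonneg: "finite X \<Longrightarrow> 0 \<le> max_row_l1 X Y A"
  unfolding max_row_l1_def by (simp add: Max_ge)

lemma row_l1_le_max_row_l1: "finite X \<Longrightarrow> x \<in> X \<Longrightarrow> (\<Sum>y\<in>Y. \<bar>A x y\<bar>) \<le> max_row_l1 X Y A"
  unfolding max_row_l1_def by (simp add: Max_ge)

lemma signed_blocky_sum_if_dominated_by_abs:
  assumes "finite X" and "finite Y" and "\<forall>x\<in>X. \<forall>y\<in>Y. 0 \<le> P x y \<and> P x y \<le> \<bar>A x y\<bar>"
  shows "signed_blocky_sum X Y P (nat (max_row_l1 X Y A))"
proof (rule signed_blocky_sum_nonneg[OF \<open>finite Y\<close>])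
  show "\<forall>x\<in>X. \<forall>y\<in>Y. 0 \<le> P x y"
    using assms(3) by blast
  show "\<forall>x\<in>X. (\<Sum>y\<in>Y. P x y) \<le> int (nat (max_row_l1 X Y A))"
  proof
    fix x assume "x \<in> X"
    have "(\<Sum>y\<in>Y. P x y) \<le> (\<Sum>y\<in>Y. \<bar>A x y\<bar>)"
      using assms(3) \<open>x \<in> X\<close> by (intro sum_mono) blast
    also have "\<dots> \<le> max_row_l1 X Y A"
      using row_l1_le_max_row_l1[OF \<open>finite X\<close> \<open>x \<in> X\<close>] .
    finally show "(\<Sum>y\<in>Y. P x y) \<le> int (nat (max_row_l1 X Y A))"
      by simp
  qed
qed

theorem lemma4p1:
  fixes X :: "'x set" and Y :: "'y set" and A :: "'x \<Rightarrow> 'y \<Rightarrow> int"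
  assumes "finite X" and "finite Y"
  shows "((\<forall>x\<in>X. \<forall>y\<in>Y. A x y \<ge> 0) \<longrightarrow> int (block X Y A) \<le> max_row_l1 X Y A)
         \<and> int (block X Y A) \<le> 2 * max_row_l1 X Y A"
proof -
  let ?n = "nat (max_row_l1 X Y A)"
  have n: "int ?n = max_row_l1 X Y A"
    using max_row_l1_nonneg[OF \<open>finite X\<close>] by simp
  have "block X Y A \<le> ?n" if "\<forall>x\<in>X. \<forall>y\<in>Y. A x y \<ge> 0"
    by (rule block_le, rule signed_blocky_sum_if_dominated_by_abs) (use assms that in auto)
  moreover have "block X Y A \<le> ?n + ?n"
  proof (rule block_le, rule signed_blocky_sum_diff)
    show "signed_blocky_sum X Y (\<lambda>x y. max (A x y) 0) ?n"
      and "signed_blocky_sum X Y (\<lambda>x y. max (- A x y) 0) ?n"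
      by (rule signed_blocky_sum_if_dominated_by_abs; use assms in auto)+
  qed auto
  ultimately show ?thesis
    using n by linarith
qed

end
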